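(* Let $\mathcal X\subseteq[0,1]$ be a Borel set with $0\in\mathcal X$ and $1\in\mathcal X$, and fix $\mu\in(0,1)$. Let $\mathcal H_\mu=\{P\in\mathcal P_{\mathcal X}:\mathbb E_P[X]=\mu\}$, let $I_\mu=[(\mu-1)^{-1},\mu^{-1}]$, and let $$\mathcal E^{\mathrm{cb}}_\mu=\big\{E_\beta:x\mapsto 1+\beta(x-\mu)\,,\ \beta\in I_\mu\big\}.$$ Then $\mathcal E^{\mathrm{cb}}_\mu$ is the optimal e-class for $\mathcal H_\mu$.
   Context: $\mathcal P_{\mathcal Z}$ denotes the set of Borel probability measures on a Borel set $\mathcal Z\subseteq\mathbb R^d$. A hypothesis is a non-empty $\mathcal H\subseteq\mathcal P_{\mathcal Z}$. An e-variable for $\mathcal H$ is a Borel measurable $E:\mathcal Z\to[0,+\infty)$ with $\mathbb E_P[E]\le 1$ for all $P\in\mathcal H$; $\mathcal E_{\mathcal H}$ is the set of all e-variables for $\mathcal H$, and an e-class is any subset of $\mathcal E_{\mathcal H}$. For functions $f,f'$ on $\mathcal Z$, $f\succeq f'$ means $f(z)\ge f'(z)$ for all $z\in\mathcal Z$. An e-class $\mathcal E$ majorises an e-class $\mathcal E'$ if for every $E'\in\mathcal E'$ there is $E\in\mathcal E$ with $E\succeq E'$; $\mathcal E$ is a majorising e-class if it majorises $\mathcal E_{\mathcal H}$. A majorising e-class is called optimal if it is contained in every other majorising e-class. *)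

theory Defs
  imports "HOL-Probability.Probability"
begin

definition prob_measures_on :: "'a::topological_space set \<Rightarrow> 'a measure set" where
  "prob_measures_on Z = {P. prob_space P \<and> sets P = sets (restrict_space borel Z)}"

text \<open>Functions on Z are represented as total functions that vanish outside Z.\<close>
definition e_variables :: "'a::topological_space set \<Rightarrow> 'a measure set \<Rightarrow> ('a \<Rightarrow> real) set" where
  "e_variables Z H = {E. E \<in> borel_measurable (restrict_space borel Z)
      \<and> (\<forall>z\<in>Z. 0 \<le> E z) \<and> (\<forall>x. x \<notin> Z \<longrightarrow> E x = 0)
      \<and> (\<forall>P\<in>H. (\<integral>\<^sup>+ z. ennreal (E z) \<partial>P) \<le> 1)}"

definition majorises :: "'a set \<Rightarrow> ('a \<Rightarrow> real) set \<Rightarrow> ('a \<Rightarrow> real) set \<Rightarrow> bool" where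
  "majorises Z \<E> \<E>' \<longleftrightarrow> (\<forall>E'\<in>\<E>'. \<exists>E\<in>\<E>. \<forall>z\<in>Z. E' z \<le> E z)"

definition majorising_eclass :: "'a::topological_space set \<Rightarrow> 'a measure set \<Rightarrow> ('a \<Rightarrow> real) set \<Rightarrow> bool" where
  "majorising_eclass Z H \<E> \<longleftrightarrow> \<E> \<subseteq> e_variables Z H \<and> majorises Z \<E> (e_variables Z H)"

definition optimal_eclass :: "'a::topological_space set \<Rightarrow> 'a measure set \<Rightarrow> ('a \<Rightarrow> real) set \<Rightarrow> bool" where
  "optimal_eclass Z H \<E> \<longleftrightarrow> majorising_eclass Z H \<E>
     \<and> (\<forall>\<E>'. majorising_eclass Z H \<E>' \<longrightarrow> \<E> \<subseteq> \<E>')"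

end

theory Submission
  imports Defs
begin

text \<open>Testing an e-variable E against the two-point distributions in the hypothesis shows
  p E(x) + (1 - p) E(y) \<le> 1 whenever p x + (1 - p) y = \<mu>. Hence every secant slope of E
  from (\<mu>, 1) to a point left of \<mu> dominates every such slope to a point right of \<mu>, and
  the line through (\<mu>, 1) with a slope in between majorises E; since E \<ge> 0 at 0 and 1,
  that slope lies in [1/(\<mu> - 1), 1/\<mu>]. Conversely each E_\<beta> has expectation exactly 1 under
  every P in the hypothesis, and an e-variable strictly above E_\<beta> at some z would violate the
  two-point constraint pairing z with 0 or 1. So the E_\<beta> form a majorising class of
  maximal e-variables, and such a class lies in every majorising class.\<close>

lemma optimal_eclassI:
  assumes majorising: "majorising_eclass Z H \<E>"
    and maximal: "\<And>E E'. E \<in> \<E> \<Longrightarrow> E' \<in> e_variables Z H \<Longrightarrow> \<forall>z\<in>Z. E z \<le> E' z \<Longrightarrow> E' = E"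
  shows "optimal_eclass Z H \<E>"
  unfolding optimal_eclass_def
proof (intro conjI allI impI subsetI)
  fix \<E>' E
  assume \<E>': "majorising_eclass Z H \<E>'" and E: "E \<in> \<E>"
  have "E \<in> e_variables Z H"
    using majorising E by (auto simp: majorising_eclass_def)
  then obtain E' where "E' \<in> \<E>'" and "\<forall>z\<in>Z. E z \<le> E' z"
    using \<E>' by (auto simp: majorising_eclass_def majorises_def)
  moreover have "E' \<in> e_variables Z H"
    using \<E>' \<open>E' \<in> \<E>'\<close> by (auto simp: majorising_eclass_def)
  ultimately show "E \<in> \<E>'"
    using maximal[OF E] by metis
qed (fact majorising)

definition two_point_measure :: "'a::topological_space set \<Rightarrow> real \<Rightarrow> 'a \<Rightarrow> 'a \<Rightarrow> 'a measure" where
  "two_point_measure Z p x y =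
     distr (measure_pmf (bernoulli_pmf p)) (restrict_space borel Z) (\<lambda>b. if b then x else y)"

lemma measurable_two_point_choice:
  "x \<in> Z \<Longrightarrow> y \<in> Z \<Longrightarrow>
     (\<lambda>b. if b then x else y) \<in> measurable (measure_pmf (bernoulli_pmf p)) (restrict_space borel Z)"
  by (auto simp: space_restrict_space)

lemma two_point_measure_in_prob_measures_on:
  "x \<in> Z \<Longrightarrow> y \<in> Z \<Longrightarrow> two_point_measure Z p x y \<in> prob_measures_on Z"
  unfolding prob_measures_on_def two_point_measure_def
  by (auto intro!: measure_pmf.prob_space_distr measurable_two_point_choice)

lemma integral_two_point_measure:
  fixes f :: "'a::topological_space \<Rightarrow> real"
  assumes "x \<in> Z" "y \<in> Z" "0 \<le> p" "p \<le> 1" "f \<in> borel_measurable (restrict_space borel Z)"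
  shows "(\<integral>z. f z \<partial>two_point_measure Z p x y) = p * f x + (1 - p) * f y"
  unfolding two_point_measure_def
  using assms by (subst integral_distr[OF measurable_two_point_choice]) auto

lemma nn_integral_two_point_measure:
  fixes f :: "'a::topological_space \<Rightarrow> real"
  assumes "x \<in> Z" "y \<in> Z" "0 \<le> p" "p \<le> 1" "f \<in> borel_measurable (restrict_space borel Z)"
    and "0 \<le> f x" "0 \<le> f y"
  shows "(\<integral>\<^sup>+ z. ennreal (f z) \<partial>two_point_measure Z p x y) = ennreal (p * f x + (1 - p) * f y)"
proof -
  have "(\<integral>\<^sup>+ z. ennreal (f z) \<partial>two_point_measure Z p x y) = ennreal (f x) * p + ennreal (f y) * (1 - p)"
    unfolding two_point_measure_def
    using assms by (subst nn_integral_distr[OF measurable_two_point_choice]) auto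
  also have "\<dots> = ennreal (p * f x + (1 - p) * f y)"
    using assms by (simp add: ennreal_plus ennreal_mult mult.commute)
  finally show ?thesis .
qed

locale bounded_mean =
  fixes X :: "real set" and \<mu> :: real
  assumes X_borel: "X \<in> sets borel" and X_unit: "X \<subseteq> {0..1}" and zero_in_X: "0 \<in> X"
    and one_in_X: "1 \<in> X" and mu_pos: "0 < \<mu>" and mu_less_1: "\<mu> < 1"
begin

abbreviation H :: "real measure set" where
  "H \<equiv> {P \<in> prob_measures_on X. (\<integral>x. x \<partial>P) = \<mu>}"

abbreviation betting_range :: "real set" where
  "betting_range \<equiv> {1 / (\<mu> - 1) .. 1 / \<mu>}"

definition betting_e :: "real \<Rightarrow> real \<Rightarrow> real" where
  "betting_e \<beta> = (\<lambda>x. if x \<in> X then 1 + \<beta> * (x - \<mu>) else 0)"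

lemma e_variable_two_point_bound:
  assumes E: "E \<in> e_variables X H" and "x \<in> X" "y \<in> X" "0 \<le> p" "p \<le> 1"
    and "p * x + (1 - p) * y = \<mu>"
  shows "p * E x + (1 - p) * E y \<le> 1"
proof -
  let ?P = "two_point_measure X p x y"
  have E_meas: "E \<in> borel_measurable (restrict_space borel X)" and E_nonneg: "\<forall>z\<in>X. 0 \<le> E z"
    using E by (auto simp: e_variables_def)
  have "?P \<in> H"
    using assms by (simp add: two_point_measure_in_prob_measures_on integral_two_point_measure
        measurable_restrict_space1)
  then have "(\<integral>\<^sup>+ z. ennreal (E z) \<partial>?P) \<le> 1"
    using E by (auto simp: e_variables_def)
  also have "(\<integral>\<^sup>+ z. ennreal (E z) \<partial>?P) = ennreal (p * E x + (1 - p) * E y)"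
    using assms E_meas E_nonneg by (intro nn_integral_two_point_measure) auto
  finally show ?thesis
    by (simp only: ennreal_le_1)
qed

lemma e_variable_at_mean_le_1:
  assumes "E \<in> e_variables X H" "\<mu> \<in> X"
  shows "E \<mu> \<le> 1"
  using e_variable_two_point_bound[OF assms(1) assms(2) assms(2), of 1] by simp

lemma betting_e_nonneg:
  assumes \<beta>: "\<beta> \<in> betting_range" and z: "z \<in> {0..1}"
  shows "0 \<le> 1 + \<beta> * (z - \<mu>)"
proof -
  have "\<beta> * \<mu> \<le> 1" "\<beta> * (\<mu> - 1) \<le> 1"
    using \<beta> mu_pos mu_less_1 by (auto simp: le_divide_eq divide_le_eq)
  then have "0 \<le> 1 - \<beta> * \<mu>" "0 \<le> 1 + \<beta> * (1 - \<mu>)"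
    by (simp_all add: algebra_simps)
  then have "0 \<le> (1 - z) * (1 - \<beta> * \<mu>)" "0 \<le> z * (1 + \<beta> * (1 - \<mu>))"
    using z by (simp_all add: mult_nonneg_nonneg)
  then have "0 \<le> (1 - z) * (1 - \<beta> * \<mu>) + z * (1 + \<beta> * (1 - \<mu>))"
    by simp
  also have "\<dots> = 1 + \<beta> * (z - \<mu>)"
    by (simp add: algebra_simps)
  finally show ?thesis .
qed

lemma betting_e_measurable: "betting_e \<beta> \<in> borel_measurable (restrict_space borel X)"
  unfolding betting_e_def using X_borel
  by (intro measurable_restrict_space1) (auto intro!: borel_measurable_if)

lemma nn_integral_betting_e:
  assumes \<beta>: "\<beta> \<in> betting_range" and P: "P \<in> H"
  shows "(\<integral>\<^sup>+ z. ennreal (betting_e \<beta> z) \<partial>P) = 1"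
proof -
  have sets_P: "sets P = sets (restrict_space borel X)"
    using P by (auto simp: prob_measures_on_def)
  interpret prob_space P
    using P by (auto simp: prob_measures_on_def)
  have space_P: "space P = X"
    using sets_eq_imp_space_eq[OF sets_P] by (simp add: space_restrict_space)
  have bounded: "AE z in P. 0 \<le> z \<and> z \<le> 1"
    using X_unit space_P by (auto intro!: AE_I2)
  have integrable_id: "integrable P (\<lambda>z. z)"
    using bounded by (intro integrable_const_bound[where B=1])
      (auto simp: measurable_cong_sets[OF sets_P refl] measurable_restrict_space1)
  have betting_e_eq: "AE z in P. betting_e \<beta> z = 1 + \<beta> * (z - \<mu>)"
    by (auto simp: betting_e_def space_P intro!: AE_I2)
  have "(\<integral>\<^sup>+ z. ennreal (betting_e \<beta> z) \<partial>P) = (\<integral>\<^sup>+ z. ennreal (1 + \<beta> * (z - \<mu>)) \<partial>P)"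
    using betting_e_eq by (intro nn_integral_cong_AE) auto
  also have "\<dots> = ennreal (\<integral>z. 1 + \<beta> * (z - \<mu>) \<partial>P)"
    using integrable_id bounded betting_e_nonneg[OF \<beta>]
    by (intro nn_integral_eq_integral) auto
  also have "(\<integral>z. 1 + \<beta> * (z - \<mu>) \<partial>P) = 1 + \<beta> * ((\<integral>z. z \<partial>P) - \<mu>)"
    using integrable_id prob_space by (simp add: algebra_simps)
  finally show ?thesis
    using P by simp
qed

lemma betting_e_in_e_variables:
  assumes "\<beta> \<in> betting_range"
  shows "betting_e \<beta> \<in> e_variables X H"
  using assms betting_e_measurable nn_integral_betting_e betting_e_nonneg X_unit
  by (auto simp: e_variables_def betting_e_def)

lemma e_variable_secant_slopes:
  assumes E: "E \<in> e_variables X H" and x: "x \<in> X" "x < \<mu>" and y: "y \<in> X" "\<mu> < y"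
  shows "(E y - 1) / (y - \<mu>) \<le> (1 - E x) / (\<mu> - x)"
proof -
  define p where "p = (y - \<mu>) / (y - x)"
  have p: "0 \<le> p" "p \<le> 1" and weight_x: "(y - x) * p = y - \<mu>"
    using x y by (auto simp: p_def divide_le_eq)
  then have weight_y: "(y - x) * (1 - p) = \<mu> - x"
    by (simp add: algebra_simps)
  have "p * x + (1 - p) * y = \<mu>"
    using weight_x by (simp add: algebra_simps)
  then have "(y - x) * (p * E x + (1 - p) * E y) \<le> (y - x) * 1"
    using e_variable_two_point_bound[OF E x(1) y(1) p] x y by (intro mult_left_mono) auto
  also have "(y - x) * (p * E x + (1 - p) * E y) = ((y - x) * p) * E x + ((y - x) * (1 - p)) * E y"
    by (simp add: algebra_simps)
  finally have "(y - \<mu>) * E x + (\<mu> - x) * E y \<le> y - x"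
    unfolding weight_x weight_y by simp
  then show ?thesis
    using x y by (simp add: field_simps)
qed

lemma ex_betting_e_above:
  assumes E: "E \<in> e_variables X H"
  shows "\<exists>\<beta>\<in>betting_range. \<forall>z\<in>X. E z \<le> betting_e \<beta> z"
proof -
  define \<beta> where "\<beta> = Inf {(1 - E x) / (\<mu> - x) | x. x \<in> X \<and> x < \<mu>}"
  have E_nonneg: "0 \<le> E z" if "z \<in> X" for z
    using E that by (auto simp: e_variables_def)
  have left: "\<beta> \<le> (1 - E x) / (\<mu> - x)" if "x \<in> X" "x < \<mu>" for x
    unfolding \<beta>_def using that e_variable_secant_slopes[OF E _ _ one_in_X mu_less_1]
    by (intro cInf_lower) (auto simp: bdd_below_def)
  have right: "(E y - 1) / (y - \<mu>) \<le> \<beta>" if "y \<in> X" "\<mu> < y" for y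
    unfolding \<beta>_def using zero_in_X mu_pos e_variable_secant_slopes[OF E _ _ that]
    by (intro cInf_greatest) auto
  have "\<beta> \<le> (1 - E 0) / \<mu>"
    using left[OF zero_in_X mu_pos] by simp
  also have "\<dots> \<le> 1 / \<mu>"
    using E_nonneg[OF zero_in_X] mu_pos by (simp add: divide_right_mono)
  finally have "\<beta> \<le> 1 / \<mu>" .
  moreover have "1 / (\<mu> - 1) \<le> \<beta>"
    using right[OF one_in_X mu_less_1] E_nonneg[OF one_in_X] mu_less_1
    by (simp add: field_simps)
  moreover have "E z \<le> betting_e \<beta> z" if z: "z \<in> X" for z
  proof (cases z \<mu> rule: linorder_cases)
    case less
    then show ?thesis
      using left[OF z less] z by (simp add: betting_e_def le_divide_eq algebra_simps)
  next
    case equal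
    then show ?thesis
      using e_variable_at_mean_le_1[OF E] z by (simp add: betting_e_def)
  next
    case greater
    then show ?thesis
      using right[OF z greater] z by (simp add: betting_e_def divide_le_eq algebra_simps)
  qed
  ultimately show ?thesis
    by (intro bexI[of _ \<beta>]) auto
qed

lemma e_variable_le_betting_e_two_point:
  assumes "E \<in> e_variables X H" and "z \<in> X" "w \<in> X" "0 < p" "p \<le> 1"
    and mean: "p * z + (1 - p) * w = \<mu>" and "betting_e \<beta> w \<le> E w"
  shows "E z \<le> betting_e \<beta> z"
proof -
  have "p * betting_e \<beta> z + (1 - p) * betting_e \<beta> w = 1 + \<beta> * (p * z + (1 - p) * w - \<mu>)"
    using \<open>z \<in> X\<close> \<open>w \<in> X\<close> by (simp add: betting_e_def algebra_simps)
  also have "\<dots> = 1"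
    using mean by simp
  finally have "p * betting_e \<beta> z + (1 - p) * betting_e \<beta> w = 1" .
  moreover have "p * E z + (1 - p) * E w \<le> 1"
    using assms by (intro e_variable_two_point_bound) auto
  moreover have "(1 - p) * betting_e \<beta> w \<le> (1 - p) * E w"
    using assms by (intro mult_left_mono) auto
  ultimately have "p * E z \<le> p * betting_e \<beta> z"
    by linarith
  then show ?thesis
    using \<open>0 < p\<close> by simp
qed

lemma betting_e_maximal:
  assumes E: "E \<in> e_variables X H" and above: "\<forall>z\<in>X. betting_e \<beta> z \<le> E z"
  shows "E = betting_e \<beta>"
proof
  fix z
  show "E z = betting_e \<beta> z"
  proof (cases "z \<in> X")
    case False
    then show ?thesis
      using E by (auto simp: e_variables_def betting_e_def)
  next
    case z: True
    have "E z \<le> betting_e \<beta> z"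
    proof (cases z \<mu> rule: linorder_cases)
      case less
      define p where "p = (1 - \<mu>) / (1 - z)"
      have "z < 1"
        using less mu_less_1 by simp
      then have "p * (1 - z) = 1 - \<mu>" "0 < p" "p \<le> 1"
        using less mu_less_1 by (auto simp: p_def)
      then have "p * z + (1 - p) * 1 = \<mu>" "0 < p" "p \<le> 1"
        by (simp_all add: algebra_simps)
      then show ?thesis
        using above one_in_X by (intro e_variable_le_betting_e_two_point[OF E z one_in_X]) auto
    next
      case equal
      then show ?thesis
        using z above by (intro e_variable_le_betting_e_two_point[OF E z z, of 1]) auto
    next
      case greater
      then have "\<mu> / z * z + (1 - \<mu> / z) * 0 = \<mu>" "0 < \<mu> / z" "\<mu> / z \<le> 1"
        using mu_pos by auto
      then show ?thesis
        using above zero_in_X by (intro e_variable_le_betting_e_two_point[OF E z zero_in_X]) auto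
    qed
    then show ?thesis
      using above z by (simp add: order_antisym)
  qed
qed

end

theorem theorem1:
  fixes X :: "real set" and \<mu> :: real
  assumes "X \<in> sets borel" and "X \<subseteq> {0..1}" and "0 \<in> X" and "1 \<in> X"
    and "0 < \<mu>" and "\<mu> < 1"
  shows "optimal_eclass X {P \<in> prob_measures_on X. (\<integral>x. x \<partial>P) = \<mu>}
           {(\<lambda>x. if x \<in> X then 1 + \<beta> * (x - \<mu>) else 0) | \<beta>. \<beta> \<in> {1 / (\<mu> - 1) .. 1 / \<mu>}}"
proof -
  interpret bounded_mean X \<mu>
    using assms by unfold_locales
  have "optimal_eclass X H {betting_e \<beta> | \<beta>. \<beta> \<in> betting_range}"
  proof (rule optimal_eclassI)
    show "majorising_eclass X H {betting_e \<beta> | \<beta>. \<beta> \<in> betting_range}"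
      unfolding majorising_eclass_def majorises_def
      using betting_e_in_e_variables ex_betting_e_above by blast
  qed (auto dest: betting_e_maximal)
  then show ?thesis
    by (simp add: betting_e_def)
qed

end
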